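(* Let $G=(V,A)$ be a directed multigraph, $T^+,T^-\subseteq V$ disjoint, $T=T^+\cup T^-$, and let $k\in\mathbb{N}$, $k\geq1$. Then the family $$\mathcal X_k:=\{X\subseteq T:\ \text{there are disjoint } X\text{-cuts } S_1,\dots,S_k\in 2^V\}$$ is closed under set union and set intersection.
   Context: For $S\subseteq V$, $\delta(S)$ is the set of arcs with one endpoint in $S$ and the other in $V\setminus S$ (either direction). For $X\subseteq T$, sets $S_1,\dots,S_k\subseteq V$ are called disjoint $X$-cuts if $S_1\subseteq S_2\subseteq\dots\subseteq S_k$, each $S_i$ satisfies $X\cap T^+\subseteq S_i$ and $T^-\setminus X\subseteq V\setminus S_i$, and $\delta(S_i)\cap\delta(S_j)=\emptyset$ for all $i\ne j$. *)

theory Defs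
  imports Main
begin

definition multigraph :: "'a set \<Rightarrow> 'b set \<Rightarrow> ('b \<Rightarrow> 'a) \<Rightarrow> ('b \<Rightarrow> 'a) \<Rightarrow> bool" where
  "multigraph V A tail head \<longleftrightarrow> finite V \<and> finite A \<and> (\<forall>e\<in>A. tail e \<in> V \<and> head e \<in> V)"

definition cut_arcs :: "'a set \<Rightarrow> 'b set \<Rightarrow> ('b \<Rightarrow> 'a) \<Rightarrow> ('b \<Rightarrow> 'a) \<Rightarrow> 'a set \<Rightarrow> 'b set" where
  "cut_arcs V A tail head S = {e\<in>A. (tail e \<in> S \<and> head e \<in> V - S) \<or> (head e \<in> S \<and> tail e \<in> V - S)}"

definition disjoint_X_cuts ::
  "'a set \<Rightarrow> 'b set \<Rightarrow> ('b \<Rightarrow> 'a) \<Rightarrow> ('b \<Rightarrow> 'a) \<Rightarrow> 'a set \<Rightarrow> 'a set \<Rightarrow> 'a set \<Rightarrow> nat \<Rightarrow> (nat \<Rightarrow> 'a set) \<Rightarrow> bool" where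
  "disjoint_X_cuts V A tail head Tp Tm X k S \<longleftrightarrow>
     (\<forall>i\<in>{1..k}. S i \<subseteq> V) \<and>
     (\<forall>i\<in>{1..k}. \<forall>j\<in>{1..k}. i \<le> j \<longrightarrow> S i \<subseteq> S j) \<and>
     (\<forall>i\<in>{1..k}. X \<inter> Tp \<subseteq> S i \<and> Tm - X \<subseteq> V - S i) \<and>
     (\<forall>i\<in>{1..k}. \<forall>j\<in>{1..k}. i \<noteq> j \<longrightarrow>
        cut_arcs V A tail head (S i) \<inter> cut_arcs V A tail head (S j) = {})"

definition cut_family ::
  "'a set \<Rightarrow> 'b set \<Rightarrow> ('b \<Rightarrow> 'a) \<Rightarrow> ('b \<Rightarrow> 'a) \<Rightarrow> 'a set \<Rightarrow> 'a set \<Rightarrow> nat \<Rightarrow> 'a set set" where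
  "cut_family V A tail head Tp Tm k =
     {X. X \<subseteq> Tp \<union> Tm \<and> (\<exists>S. disjoint_X_cuts V A tail head Tp Tm X k S)}"

end

theory Submission
  imports Defs
begin

text \<open>Given disjoint \<open>X\<close>-cuts \<open>S\<^sub>i\<close> and disjoint \<open>Y\<close>-cuts \<open>R\<^sub>i\<close>, the sets \<open>S\<^sub>i \<union> R\<^sub>i\<close> are
  disjoint \<open>X \<union> Y\<close>-cuts and the sets \<open>S\<^sub>i \<inter> R\<^sub>i\<close> are disjoint \<open>X \<inter> Y\<close>-cuts. Only disjointness
  needs an argument: for \<open>i < j\<close> we have \<open>S\<^sub>i \<subseteq> S\<^sub>j\<close> and \<open>R\<^sub>i \<subseteq> R\<^sub>j\<close>, so an arc crossing both
  \<open>S\<^sub>i \<union> R\<^sub>i\<close> and \<open>S\<^sub>j \<union> R\<^sub>j\<close> joins \<open>S\<^sub>i \<union> R\<^sub>i\<close> to the complement of \<open>S\<^sub>j \<union> R\<^sub>j\<close>, hence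
  crosses both \<open>S\<^sub>i\<close> and \<open>S\<^sub>j\<close> or both \<open>R\<^sub>i\<close> and \<open>R\<^sub>j\<close>; intersections are dual.\<close>

lemma disjoint_X_cuts_altdef:
  "disjoint_X_cuts V A t h Tp Tm X k S \<longleftrightarrow>
    (\<forall>i\<in>{1..k}. S i \<subseteq> V \<and> X \<inter> Tp \<subseteq> S i \<and> Tm - X \<subseteq> V - S i) \<and>
    (\<forall>i\<in>{1..k}. \<forall>j\<in>{1..k}. i < j \<longrightarrow>
       S i \<subseteq> S j \<and> cut_arcs V A t h (S i) \<inter> cut_arcs V A t h (S j) = {})"
  (is "?lhs \<longleftrightarrow> ?rhs")
proof
  assume ?lhs then show ?rhs
    unfolding disjoint_X_cuts_def by auto
next
  assume rhs: ?rhs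
  have "S i \<subseteq> S j" if "i \<in> {1..k}" "j \<in> {1..k}" "i \<le> j" for i j
    using rhs that by (cases "i = j") auto
  moreover have "cut_arcs V A t h (S i) \<inter> cut_arcs V A t h (S j) = {}"
    if "i \<in> {1..k}" "j \<in> {1..k}" "i \<noteq> j" for i j
  proof (cases "i < j")
    case True
    with rhs that show ?thesis by blast
  next
    case False
    with \<open>i \<noteq> j\<close> have "j < i" by simp
    with rhs that show ?thesis by (metis Int_commute)
  qed
  ultimately show ?lhs
    using rhs unfolding disjoint_X_cuts_def by blast
qed

lemma cut_arcs_Un_Int_subset:
  assumes "S \<subseteq> S'" "R \<subseteq> R'"
  shows "cut_arcs V A t h (S \<union> R) \<inter> cut_arcs V A t h (S' \<union> R') \<subseteq>
    cut_arcs V A t h S \<inter> cut_arcs V A t h S' \<union> cut_arcs V A t h R \<inter> cut_arcs V A t h R'"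
  using assms by (auto simp: cut_arcs_def)

lemma cut_arcs_Int_Int_subset:
  assumes "S \<subseteq> S'" "R \<subseteq> R'"
  shows "cut_arcs V A t h (S \<inter> R) \<inter> cut_arcs V A t h (S' \<inter> R') \<subseteq>
    cut_arcs V A t h S \<inter> cut_arcs V A t h S' \<union> cut_arcs V A t h R \<inter> cut_arcs V A t h R'"
  using assms by (auto simp: cut_arcs_def)

lemma disjoint_X_cuts_Un:
  assumes S: "disjoint_X_cuts V A t h Tp Tm X k S"
    and R: "disjoint_X_cuts V A t h Tp Tm Y k R"
  shows "disjoint_X_cuts V A t h Tp Tm (X \<union> Y) k (\<lambda>i. S i \<union> R i)"
  unfolding disjoint_X_cuts_altdef
proof (rule conjI; intro ballI impI)
  fix i assume "i \<in> {1..k}"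
  with S R have "S i \<subseteq> V \<and> X \<inter> Tp \<subseteq> S i \<and> Tm - X \<subseteq> V - S i"
    and "R i \<subseteq> V \<and> Y \<inter> Tp \<subseteq> R i \<and> Tm - Y \<subseteq> V - R i"
    unfolding disjoint_X_cuts_altdef by simp_all
  then show "S i \<union> R i \<subseteq> V \<and> (X \<union> Y) \<inter> Tp \<subseteq> S i \<union> R i \<and>
      Tm - (X \<union> Y) \<subseteq> V - (S i \<union> R i)"
    by auto
next
  fix i j assume "i \<in> {1..k}" "j \<in> {1..k}" "i < j"
  with S R have "S i \<subseteq> S j" "R i \<subseteq> R j"
    and "cut_arcs V A t h (S i) \<inter> cut_arcs V A t h (S j) = {}"
    and "cut_arcs V A t h (R i) \<inter> cut_arcs V A t h (R j) = {}"
    unfolding disjoint_X_cuts_altdef by simp_all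
  then show "S i \<union> R i \<subseteq> S j \<union> R j \<and>
      cut_arcs V A t h (S i \<union> R i) \<inter> cut_arcs V A t h (S j \<union> R j) = {}"
    using cut_arcs_Un_Int_subset[OF \<open>S i \<subseteq> S j\<close> \<open>R i \<subseteq> R j\<close>, of V A t h] by auto
qed

lemma disjoint_X_cuts_Int:
  assumes S: "disjoint_X_cuts V A t h Tp Tm X k S"
    and R: "disjoint_X_cuts V A t h Tp Tm Y k R"
  shows "disjoint_X_cuts V A t h Tp Tm (X \<inter> Y) k (\<lambda>i. S i \<inter> R i)"
  unfolding disjoint_X_cuts_altdef
proof (rule conjI; intro ballI impI)
  fix i assume "i \<in> {1..k}"
  with S R have "S i \<subseteq> V \<and> X \<inter> Tp \<subseteq> S i \<and> Tm - X \<subseteq> V - S i"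
    and "R i \<subseteq> V \<and> Y \<inter> Tp \<subseteq> R i \<and> Tm - Y \<subseteq> V - R i"
    unfolding disjoint_X_cuts_altdef by simp_all
  then show "S i \<inter> R i \<subseteq> V \<and> (X \<inter> Y) \<inter> Tp \<subseteq> S i \<inter> R i \<and>
      Tm - (X \<inter> Y) \<subseteq> V - (S i \<inter> R i)"
    by auto
next
  fix i j assume "i \<in> {1..k}" "j \<in> {1..k}" "i < j"
  with S R have "S i \<subseteq> S j" "R i \<subseteq> R j"
    and "cut_arcs V A t h (S i) \<inter> cut_arcs V A t h (S j) = {}"
    and "cut_arcs V A t h (R i) \<inter> cut_arcs V A t h (R j) = {}"
    unfolding disjoint_X_cuts_altdef by simp_all
  then show "S i \<inter> R i \<subseteq> S j \<inter> R j \<and>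
      cut_arcs V A t h (S i \<inter> R i) \<inter> cut_arcs V A t h (S j \<inter> R j) = {}"
    using cut_arcs_Int_Int_subset[OF \<open>S i \<subseteq> S j\<close> \<open>R i \<subseteq> R j\<close>, of V A t h] by auto
qed

theorem lemma4:
  fixes V :: "'a set" and A :: "'b set" and tail head :: "'b \<Rightarrow> 'a"
    and Tp Tm :: "'a set" and k :: nat
  assumes "multigraph V A tail head"
    and "Tp \<subseteq> V" and "Tm \<subseteq> V" and "Tp \<inter> Tm = {}"
    and "k \<ge> 1"
    and "X \<in> cut_family V A tail head Tp Tm k" and "Y \<in> cut_family V A tail head Tp Tm k"
  shows "X \<union> Y \<in> cut_family V A tail head Tp Tm k \<and> X \<inter> Y \<in> cut_family V A tail head Tp Tm k"
proof -
  obtain S R where "disjoint_X_cuts V A tail head Tp Tm X k S"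
    and "disjoint_X_cuts V A tail head Tp Tm Y k R"
    and "X \<subseteq> Tp \<union> Tm" "Y \<subseteq> Tp \<union> Tm"
    using assms(6,7) unfolding cut_family_def by blast
  then have "disjoint_X_cuts V A tail head Tp Tm (X \<union> Y) k (\<lambda>i. S i \<union> R i)"
    and "disjoint_X_cuts V A tail head Tp Tm (X \<inter> Y) k (\<lambda>i. S i \<inter> R i)"
    by (simp_all add: disjoint_X_cuts_Un disjoint_X_cuts_Int)
  with \<open>X \<subseteq> Tp \<union> Tm\<close> \<open>Y \<subseteq> Tp \<union> Tm\<close> show ?thesis
    unfolding cut_family_def by auto
qed

end
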